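(* Let $(V,\Omega)$ be a complex symplectic vector space of dimension $2n$ with Weyl algebra $\mathscr W$, let $H\subset USp(V,\Omega)$ be a connected compact Lie group with Lie algebra $\mathfrak h$, let $\mathbf m\in i\mathfrak h$ act invertibly on $V$, and let $\boldsymbol\zeta\colon\mathfrak h\to\mathbb R$ be a Lie algebra character (extended complex-linearly). Let $\hat\mu_{\boldsymbol\zeta}=\hat\mu(\mathbf m)+\boldsymbol\zeta(\mathbf m)\in\mathscr W$, $g=\exp(2\pi\mathbf m)\in H_{\mathbb C}$, $V^{\pm}$ the sums of eigenspaces of $\mathbf m$ on $V$ with positive/negative eigenvalues, and $\mathbb V=\mathscr W/\mathscr W V^+$. Then the functional $$\operatorname{Tr}_{\mathbf m}(w)=\operatorname{Tr}\big(\mathbb V;(-1)^F\exp(2\pi\hat\mu_{\boldsymbol\zeta})\,w\big),\qquad w\in\mathscr W,$$ is well defined (the defining series converges for every $w$), it is a twisted trace on $\mathscr W$ for the automorphism $(-1)^Fg^{-1}$, i.e. $\operatorname{Tr}_{\mathbf m}(w_1w_2)=\operatorname{Tr}_{\mathbf m}\big(((-1)^Fg^{-1}\cdot w_2)\,w_1\big)$ for all $w_1,w_2\in\mathscr W$, and every linear functional $\mathscr W\to\mathbb C$ that is a twisted trace for this automorphism is a scalar multiple of $\operatorname{Tr}_{\mathbf m}$.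
   Context: The Weyl algebra $\mathscr W$ is the $\mathbb C$-algebra generated by $V$ modulo $uv-vu=\Omega(u,v)$. $USp(V,\Omega)=Sp(V,\Omega)\cap U(V)$ for a hermitian inner product compatible with $\Omega$; $H$ (hence $H_{\mathbb C}$) acts on $\mathscr W$ by algebra automorphisms extending its action on $V$. For $X\in\mathfrak h_{\mathbb C}$, $\hat\mu(X)=\tfrac12 m((1\otimes\kappa^{-1})(X_V))$ where $\Omega(u,v)=\langle u,\kappa(v)\rangle$, $X_V\in V\otimes V^*$ is the action of $X$ and $m\colon V\otimes V\to\mathscr W$ is multiplication; concretely, in a Darboux basis ($[x_i,y_j]=\delta_{ij}$, $[x_i,x_j]=[y_i,y_j]=0$) with $Xx_i=-a_ix_i$, $Xy_i=a_iy_i$, $\hat\mu(X)=\sum_i a_i(y_ix_i+\tfrac12)$. The eigenvalues of $\mathbf m$ on $V$ are real and nonzero and $V^\pm$ are Lagrangian. $(-1)^F$ is the automorphism of $\mathscr W$ induced by $v\mapsto -v$ on $V$; it preserves $\mathscr WV^+$ and so induces a linear endomorphism of $\mathbb V$. Choosing a Darboux basis of $\mathbf m$-eigenvectors with $x_i\in V^-$, $y_i\in V^+$, the module $\mathbb V$ has basis $x_1^{u_1}\cdots x_n^{u_n}\cdot[1]$, $u\in\mathbb Z_{\ge0}^n$, on which $\hat\mu_{\boldsymbol\zeta}$ acts diagonally; $\operatorname{Tr}(\mathbb V;A)$ denotes the sum of the diagonal matrix coefficients of $A$ in this basis. A twisted trace for an automorphism $\omega$ of an algebra $\mathscr A$ is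 a linear map $\operatorname{Tr}_\omega\colon\mathscr A\to\mathbb C$ with $\operatorname{Tr}_\omega(XY)=\operatorname{Tr}_\omega(\omega(Y)X)$. *)

theory Defs
  imports "HOL-Analysis.Analysis"
begin

text \<open>A Darboux basis x_i (in V^-), y_i (in V^+), indexed by a finite
type 'n, with m x_i = -a_i x_i and m y_i = a_i y_i, a_i > 0. The Fock module
V = W / W V^+ has basis x^u [1]; an element of V is recorded by its coefficient function
on multi-indices u :: 'n => nat. The Weyl algebra is realised (faithfully) as the algebra
of operators on V generated by the actions of x_i and y_i.\<close>

type_synonym 'n fock = "('n \<Rightarrow> nat) \<Rightarrow> complex"
type_synonym 'n wop = "'n fock \<Rightarrow> 'n fock"

definition Xop :: "'n \<Rightarrow> 'n wop" where
  "Xop i f = (\<lambda>u. if u i = 0 then 0 else f (u(i := u i - 1)))"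

text \<open>Action of y_i on V; since [x_i, y_i] = 1 and y_i [1] = 0, y_i acts as minus d/dx_i.\<close>
definition Yop :: "'n \<Rightarrow> 'n wop" where
  "Yop i f = (\<lambda>u. - of_nat (u i + 1) * f (u(i := u i + 1)))"

inductive_set weyl :: "'n wop set" where
  one: "id \<in> weyl"
| genX: "Xop i \<in> weyl"
| genY: "Yop i \<in> weyl"
| add: "w \<in> weyl \<Longrightarrow> w' \<in> weyl \<Longrightarrow> (\<lambda>f u. w f u + w' f u) \<in> weyl"
| smult: "w \<in> weyl \<Longrightarrow> (\<lambda>f u. c * w f u) \<in> weyl"
| mult: "w \<in> weyl \<Longrightarrow> w' \<in> weyl \<Longrightarrow> w \<circ> w' \<in> weyl"

definition basisv :: "('n \<Rightarrow> nat) \<Rightarrow> 'n fock" where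
  "basisv u = (\<lambda>v. if v = u then 1 else 0)"

text \<open>hat mu_zeta = sum_i a_i (y_i x_i + 1/2) + zeta(m), acting on V.\<close>
definition muhat :: "('n::finite \<Rightarrow> real) \<Rightarrow> complex \<Rightarrow> 'n wop" where
  "muhat a c f = (\<lambda>u. (\<Sum>i\<in>UNIV. complex_of_real (a i) * (Yop i (Xop i f) u + f u / 2)) + c * f u)"

text \<open>exp(2 pi A) for an operator A acting diagonally on the basis x^u [1].\<close>
definition diag_exp2pi :: "'n wop \<Rightarrow> 'n wop" where
  "diag_exp2pi A f = (\<lambda>u. exp (2 * complex_of_real pi * A (basisv u) u) * f u)"

definition parityV :: "'n::finite wop" where
  "parityV f = (\<lambda>u. (-1) ^ (\<Sum>i\<in>UNIV. u i) * f u)"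

definition trV :: "'n wop \<Rightarrow> complex" where
  "trV A = infsum (\<lambda>u. A (basisv u) u) UNIV"

definition trV_converges :: "'n wop \<Rightarrow> bool" where
  "trV_converges A \<longleftrightarrow> (\<lambda>u. A (basisv u) u) summable_on UNIV"

definition Tr_m :: "('n::finite \<Rightarrow> real) \<Rightarrow> complex \<Rightarrow> 'n wop \<Rightarrow> complex" where
  "Tr_m a c w = trV (parityV \<circ> diag_exp2pi (muhat a c) \<circ> w)"

text \<open>The automorphism (-1)^F g^{-1}, g = exp(2 pi m): on generators x_i maps to
-exp(2 pi a_i) x_i and y_i maps to -exp(-2 pi a_i) y_i. On the Weyl algebra it is implemented
by conjugation with the induced diagonal operator D on V (D x^u[1] = prod_i d_i^(u_i) x^u[1]).\<close>
definition twD :: "('n::finite \<Rightarrow> real) \<Rightarrow> 'n wop" where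
  "twD a f = (\<lambda>u. (\<Prod>i\<in>UNIV. (- complex_of_real (exp (2 * pi * a i))) ^ u i) * f u)"

definition twDinv :: "('n::finite \<Rightarrow> real) \<Rightarrow> 'n wop" where
  "twDinv a f = (\<lambda>u. (\<Prod>i\<in>UNIV. (- complex_of_real (exp (- 2 * pi * a i))) ^ u i) * f u)"

definition twist_aut :: "('n::finite \<Rightarrow> real) \<Rightarrow> 'n wop \<Rightarrow> 'n wop" where
  "twist_aut a w = twD a \<circ> w \<circ> twDinv a"

definition weyl_linear :: "('n wop \<Rightarrow> complex) \<Rightarrow> bool" where
  "weyl_linear T \<longleftrightarrow>
     (\<forall>w\<in>weyl. \<forall>w'\<in>weyl. T (\<lambda>f u. w f u + w' f u) = T w + T w') \<and>
     (\<forall>w\<in>weyl. \<forall>c. T (\<lambda>f u. c * w f u) = c * T w)"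

definition twisted_trace :: "('n wop \<Rightarrow> 'n wop) \<Rightarrow> ('n wop \<Rightarrow> complex) \<Rightarrow> bool" where
  "twisted_trace \<omega> T \<longleftrightarrow> weyl_linear T \<and>
     (\<forall>w1\<in>weyl. \<forall>w2\<in>weyl. T (w1 \<circ> w2) = T (\<omega> w2 \<circ> w1))"

end

theory Submission
  imports Defs "HOL-Real_Asymp.Real_Asymp"
begin

text \<open>In the basis x^u[1] of the Fock module the operator (-1)^F exp(2 pi hat mu_zeta) is
diagonal, with entries proportional to the monomial prod_i q_i^(u_i) in q_i = -exp(-2 pi a_i),
so they decay geometrically, whereas the diagonal matrix coefficients of an element of the Weyl
algebra grow only polynomially in |u|; this gives convergence. Moving a generator x_i or y_i
around the trace is the reindexing u -> u + e_i, and the resulting change of the weight by the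
factor q_i is exactly compensated by the scalar by which the twist acts on that generator. For
uniqueness, the normally ordered monomials x^alpha y^beta span the Weyl algebra. A twisted trace
kills those with alpha /= beta, since the number operator x_i y_i is fixed by the twist but has
different weights on the two sides, and moving y_i around the trace expresses T(x^alpha y^alpha)
through a monomial of lower degree. Hence a twisted trace is determined by its value at 1, and
Tr_m(1) /= 0.\<close>

lemma weyl_add:
  assumes "w \<in> weyl"
  shows "w (\<lambda>u. f u + g u) = (\<lambda>u. w f u + w g u)"
  using assms
proof (induction arbitrary: f g)
  case (mult w w')
  then show ?case by simp
qed (auto simp: Xop_def Yop_def fun_eq_iff algebra_simps)

lemma weyl_scale:
  assumes "w \<in> weyl"
  shows "w (\<lambda>u. k * f u) = (\<lambda>u. k * w f u)"
  using assms
proof (induction arbitrary: f)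
  case (mult w w')
  then show ?case by simp
qed (auto simp: Xop_def Yop_def fun_eq_iff algebra_simps)

lemma prod_UNIV_fun_upd:
  fixes F :: "'n::finite \<Rightarrow> 'b \<Rightarrow> 'a::comm_monoid_mult"
  shows "(\<Prod>j\<in>UNIV. F j ((u(i := x)) j)) = F i x * (\<Prod>j\<in>UNIV - {i}. F j (u j))"
proof -
  have "(\<Prod>j\<in>UNIV. F j ((u(i := x)) j)) = F i x * (\<Prod>j\<in>UNIV - {i}. F j ((u(i := x)) j))"
    by (subst prod.remove[of UNIV i]) auto
  also have "(\<Prod>j\<in>UNIV - {i}. F j ((u(i := x)) j)) = (\<Prod>j\<in>UNIV - {i}. F j (u j))"
    by (rule prod.cong) auto
  finally show ?thesis .
qed

lemma sum_UNIV_fun_upd: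
  fixes u :: "'n::finite \<Rightarrow> nat"
  shows "sum (u(i := x)) UNIV + u i = sum u UNIV + x"
proof -
  have "sum (u(i := x)) UNIV = x + sum u (UNIV - {i})"
    by (subst sum.remove[of UNIV i]) (auto intro!: sum.cong)
  moreover have "sum u UNIV = u i + sum u (UNIV - {i})"
    by (rule sum.remove) auto
  ultimately show ?thesis by simp
qed

definition multi_power :: "('n::finite \<Rightarrow> 'a::comm_monoid_mult) \<Rightarrow> ('n \<Rightarrow> nat) \<Rightarrow> 'a" where
  "multi_power z u = (\<Prod>i\<in>UNIV. z i ^ u i)"

lemma multi_power_Suc: "multi_power z (u(i := Suc (u i))) = z i * multi_power z u"
proof -
  have "multi_power z u = z i ^ u i * (\<Prod>j\<in>UNIV - {i}. z j ^ u j)"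
    unfolding multi_power_def by (rule prod.remove) auto
  then show ?thesis
    unfolding multi_power_def prod_UNIV_fun_upd[where F = "\<lambda>j k. z j ^ k"] by (simp add: mult.assoc)
qed

lemma multi_power_mult: "multi_power z u * multi_power z' u = multi_power (\<lambda>i. z i * z' i) u"
  by (simp add: multi_power_def prod.distrib power_mult_distrib)

lemma norm_multi_power:
  fixes z :: "'n::finite \<Rightarrow> 'a::real_normed_field"
  shows "norm (multi_power z u) = multi_power (\<lambda>i. norm (z i)) u"
  by (simp add: multi_power_def prod_norm[symmetric] norm_power)

lemma multi_index_induct [case_names zero Suc]:
  fixes \<alpha> :: "'n::finite \<Rightarrow> nat"
  assumes "P (\<lambda>_. 0)" and "\<And>\<alpha> i. P \<alpha> \<Longrightarrow> P (\<alpha>(i := Suc (\<alpha> i)))"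
  shows "P \<alpha>"
proof (induction "sum \<alpha> UNIV" arbitrary: \<alpha>)
  case 0
  then have "\<alpha> = (\<lambda>_. 0)" by (simp add: fun_eq_iff)
  with assms(1) show ?case by simp
next
  case (Suc n)
  then obtain i where i: "\<alpha> i \<noteq> 0" by (metis sum.neutral nat.distinct(1))
  define \<alpha>' where "\<alpha>' = \<alpha>(i := \<alpha> i - 1)"
  have "\<alpha> = \<alpha>'(i := Suc (\<alpha>' i))" using i by (auto simp: \<alpha>'_def)
  moreover have "n = sum \<alpha>' UNIV"
    using sum_UNIV_fun_upd[of \<alpha> i "\<alpha> i - 1"] Suc.hyps(2) i by (simp add: \<alpha>'_def)
  ultimately show ?case using Suc.hyps(1) assms(2) by metis
qed

section \<open>The twist automorphism\<close>

definition twist_x :: "('n \<Rightarrow> real) \<Rightarrow> 'n \<Rightarrow> complex" where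
  "twist_x a i = - complex_of_real (exp (2 * pi * a i))"

definition twist_y :: "('n \<Rightarrow> real) \<Rightarrow> 'n \<Rightarrow> complex" where
  "twist_y a i = - complex_of_real (exp (- 2 * pi * a i))"

lemma twist_x_mult_twist_y: "twist_x a i * twist_y a i = 1"
  by (simp add: twist_x_def twist_y_def flip: of_real_mult exp_add)

lemma twist_y_neq_1: "twist_y a i \<noteq> 1"
proof
  assume "twist_y a i = 1"
  then have "Re (twist_y a i) = 1" by simp
  moreover have "Re (twist_y a i) < 0" by (simp add: twist_y_def)
  ultimately show False by simp
qed

lemma multi_power_twist_inverse: "multi_power (twist_x a) u * multi_power (twist_y a) u = 1"
  unfolding multi_power_mult twist_x_mult_twist_y by (simp add: multi_power_def)

lemma twD_apply: "twD a f u = multi_power (twist_x a) u * f u"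
  by (simp add: twD_def multi_power_def twist_x_def)

lemma twDinv_apply: "twDinv a f u = multi_power (twist_y a) u * f u"
  by (simp add: twDinv_def multi_power_def twist_y_def)

lemma twDinv_twD: "twDinv a (twD a f) = f"
  by (simp add: twD_apply twDinv_apply fun_eq_iff mult.assoc[symmetric]
      mult.commute[of "multi_power (twist_y a) _"] multi_power_twist_inverse)

lemma twD_twDinv: "twD a (twDinv a f) = f"
  by (simp add: twD_apply twDinv_apply fun_eq_iff mult.assoc[symmetric] multi_power_twist_inverse)

lemma twist_aut_id: "twist_aut a id = id"
  by (simp add: twist_aut_def fun_eq_iff twD_twDinv)

lemma twist_aut_comp: "twist_aut a (A \<circ> B) = twist_aut a A \<circ> twist_aut a B"
  by (simp add: twist_aut_def fun_eq_iff twDinv_twD)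

lemma twist_aut_add:
  "twist_aut a (\<lambda>f u. A f u + B f u) = (\<lambda>f u. twist_aut a A f u + twist_aut a B f u)"
  by (simp add: twist_aut_def fun_eq_iff twD_apply algebra_simps)

lemma twist_aut_scale: "twist_aut a (\<lambda>f u. k * A f u) = (\<lambda>f u. k * twist_aut a A f u)"
  by (simp add: twist_aut_def fun_eq_iff twD_apply algebra_simps)

lemma twist_aut_Xop: "twist_aut a (Xop i) = (\<lambda>f v. twist_x a i * Xop i f v)"
proof (intro ext)
  fix f v
  show "twist_aut a (Xop i) f v = twist_x a i * Xop i f v"
  proof (cases "v i = 0")
    case True
    then show ?thesis by (simp add: twist_aut_def twD_apply Xop_def)
  next
    case False
    define u where "u = v(i := v i - 1)"
    have "v = u(i := Suc (u i))" using False by (auto simp: u_def)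
    then have "multi_power (twist_x a) v * multi_power (twist_y a) u = twist_x a i"
      by (simp add: multi_power_Suc mult.assoc multi_power_twist_inverse)
    moreover have
      "twist_aut a (Xop i) f v = multi_power (twist_x a) v * (multi_power (twist_y a) u * f u)"
      and "Xop i f v = f u"
      using False by (simp_all add: twist_aut_def twD_apply twDinv_apply Xop_def u_def)
    ultimately show ?thesis by (simp add: mult.assoc)
  qed
qed

lemma twist_aut_Yop: "twist_aut a (Yop i) = (\<lambda>f v. twist_y a i * Yop i f v)"
proof (intro ext)
  fix f v
  have "multi_power (twist_x a) v * multi_power (twist_y a) (v(i := Suc (v i))) = twist_y a i"
    by (simp add: multi_power_Suc mult.left_commute multi_power_twist_inverse)
  then show "twist_aut a (Yop i) f v = twist_y a i * Yop i f v"
    by (simp add: twist_aut_def twD_apply twDinv_apply Yop_def)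
qed

lemma twist_aut_weyl: "w \<in> weyl \<Longrightarrow> twist_aut a w \<in> weyl"
proof (induction rule: weyl.induct)
  case one
  then show ?case by (metis twist_aut_id weyl.one)
next
  case (genX i)
  then show ?case unfolding twist_aut_Xop by (rule weyl.smult[OF weyl.genX])
next
  case (genY i)
  then show ?case unfolding twist_aut_Yop by (rule weyl.smult[OF weyl.genY])
next
  case (add w w')
  then show ?case by (simp add: twist_aut_add weyl.add)
next
  case (smult w c)
  then show ?case by (simp add: twist_aut_scale weyl.smult)
next
  case (mult w w')
  then show ?case by (metis twist_aut_comp weyl.mult)
qed

lemma muhat_basisv:
  "muhat a c (basisv u) u =
     c - (\<Sum>j\<in>UNIV. complex_of_real (a j)) / 2 - (\<Sum>j\<in>UNIV. of_nat (u j) * complex_of_real (a j))"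
proof -
  have "complex_of_real (a j) * (- of_nat (u j + 1) + 1 / 2) =
      - (complex_of_real (a j) / 2) - of_nat (u j) * complex_of_real (a j)" for j
    by (simp add: algebra_simps)
  then show ?thesis
    by (simp add: muhat_def Yop_def Xop_def basisv_def sum_subtractf sum_negf sum_divide_distrib)
qed

definition trace_weight :: "('n::finite \<Rightarrow> real) \<Rightarrow> complex \<Rightarrow> ('n \<Rightarrow> nat) \<Rightarrow> complex" where
  "trace_weight a c u = (parityV \<circ> diag_exp2pi (muhat a c)) (basisv u) u"

lemma parity_exp_apply: "parityV (diag_exp2pi (muhat a c) f) u = trace_weight a c u * f u"
  by (simp add: trace_weight_def parityV_def diag_exp2pi_def basisv_def)

lemma Tr_m_eq: "Tr_m a c w = infsum (\<lambda>u. trace_weight a c u * w (basisv u) u) UNIV"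
  by (simp add: Tr_m_def trV_def parity_exp_apply)

lemma trV_converges_iff:
  "trV_converges (parityV \<circ> diag_exp2pi (muhat a c) \<circ> w) \<longleftrightarrow>
     (\<lambda>u. trace_weight a c u * w (basisv u) u) summable_on UNIV"
  by (simp add: trV_converges_def parity_exp_apply)

lemma trace_weight_eq:
  "trace_weight a c u =
     exp (2 * pi * (c - (\<Sum>j\<in>UNIV. complex_of_real (a j)) / 2)) * multi_power (twist_y a) u"
proof -
  have "complex_of_real (exp (- 2 * pi * a j)) ^ u j =
        exp (- (2 * pi) * (of_nat (u j) * complex_of_real (a j)))" for j
    by (simp add: exp_of_real[symmetric] exp_of_nat_mult[symmetric] mult_ac)
  then have "exp (- (2 * pi) * (\<Sum>j\<in>UNIV. of_nat (u j) * complex_of_real (a j))) =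
        (\<Prod>j\<in>UNIV. complex_of_real (exp (- 2 * pi * a j)) ^ u j)"
    by (simp add: sum_distrib_left exp_sum)
  moreover have "(-1) ^ sum u UNIV * (\<Prod>j\<in>UNIV. complex_of_real (exp (- 2 * pi * a j)) ^ u j) =
        multi_power (twist_y a) u"
    by (simp add: multi_power_def twist_y_def power_sum prod.distrib[symmetric]
        power_mult_distrib[symmetric])
  moreover have "exp (2 * pi * muhat a c (basisv u) u) =
      exp (2 * pi * (c - (\<Sum>j\<in>UNIV. complex_of_real (a j)) / 2)) *
      exp (- (2 * pi) * (\<Sum>j\<in>UNIV. of_nat (u j) * complex_of_real (a j)))"
    unfolding muhat_basisv by (subst exp_add[symmetric]) (simp add: algebra_simps)
  ultimately show ?thesis
    by (simp add: trace_weight_def parityV_def diag_exp2pi_def basisv_def mult_ac)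
qed

section \<open>Convergence\<close>

definition bounded_up_to :: "nat \<Rightarrow> real \<Rightarrow> 'n::finite fock \<Rightarrow> bool" where
  "bounded_up_to N B f \<longleftrightarrow> (\<forall>u. sum u UNIV \<le> N \<longrightarrow> norm (f u) \<le> B)"

lemma bounded_up_to_mono:
  "bounded_up_to N B f \<Longrightarrow> N' \<le> N \<Longrightarrow> B \<le> B' \<Longrightarrow> bounded_up_to N' B' f"
  unfolding bounded_up_to_def by (meson le_trans order.trans)

lemma bounded_up_to_nonneg: "bounded_up_to N B f \<Longrightarrow> 0 \<le> B"
  unfolding bounded_up_to_def by (metis norm_ge_zero order_trans sum.neutral_const zero_le)

text \<open>Finite propagation R in the total degree together with polynomial growth of degree K.\<close>
definition polynomially_bounded :: "'n::finite wop \<Rightarrow> bool" where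
  "polynomially_bounded w \<longleftrightarrow> (\<exists>C R K. C \<ge> 0 \<and>
     (\<forall>N B f. bounded_up_to (N + R) B f \<longrightarrow> bounded_up_to N (C * B * (1 + real N) ^ K) (w f)))"

lemma polynomially_boundedI:
  fixes w :: "'n::finite wop"
  assumes "C \<ge> 0"
    and "\<And>N B f. bounded_up_to (N + R) B f \<Longrightarrow> bounded_up_to N (C * B * (1 + real N) ^ K) (w f)"
  shows "polynomially_bounded w"
  using assms unfolding polynomially_bounded_def by blast

lemma polynomially_boundedE:
  assumes "polynomially_bounded w"
  obtains C R K where "C \<ge> 0"
    and "\<And>N B f. bounded_up_to (N + R) B f \<Longrightarrow> bounded_up_to N (C * B * (1 + real N) ^ K) (w f)"
  using assms unfolding polynomially_bounded_def by blast

lemma polynomially_bounded_id: "polynomially_bounded id"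
  by (rule polynomially_boundedI[where C = 1 and R = 0 and K = 0]) simp_all

lemma polynomially_bounded_Xop: "polynomially_bounded (Xop (i::'n::finite))"
proof (rule polynomially_boundedI[where C = 1 and R = 0 and K = 0])
  fix N B and f :: "'n fock"
  assume f: "bounded_up_to (N + 0) B f"
  have "norm (Xop i f v) \<le> B" if v: "sum v UNIV \<le> N" for v
  proof (cases "v i = 0")
    case True
    then show ?thesis using bounded_up_to_nonneg[OF f] by (simp add: Xop_def)
  next
    case False
    have "sum (v(i := v i - 1)) UNIV \<le> N"
      using sum_UNIV_fun_upd[of v i "v i - 1"] v by simp
    with f False show ?thesis by (simp add: Xop_def bounded_up_to_def)
  qed
  then show "bounded_up_to N (1 * B * (1 + real N) ^ 0) (Xop i f)"
    by (simp add: bounded_up_to_def)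
qed simp

lemma polynomially_bounded_Yop: "polynomially_bounded (Yop (i::'n::finite))"
proof (rule polynomially_boundedI[where C = 1 and R = 1 and K = 1])
  fix N B and f :: "'n fock"
  assume f: "bounded_up_to (N + 1) B f"
  have "norm (Yop i f v) \<le> B * (1 + real N)" if v: "sum v UNIV \<le> N" for v
  proof -
    have "sum (v(i := v i + 1)) UNIV \<le> N + 1"
      using sum_UNIV_fun_upd[of v i "v i + 1"] v by simp
    with f have le_B: "norm (f (v(i := v i + 1))) \<le> B" by (simp add: bounded_up_to_def)
    have "v i \<le> sum v UNIV" by (rule member_le_sum) auto
    with v have le_N: "real (v i + 1) \<le> 1 + real N" by simp
    have "norm (Yop i f v) = real (v i + 1) * norm (f (v(i := v i + 1)))"
      by (simp only: Yop_def norm_mult norm_minus_cancel norm_of_nat)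
    also have "\<dots> \<le> (1 + real N) * B"
      by (rule mult_mono[OF le_N le_B]) simp_all
    finally show ?thesis by (simp only: mult.commute)
  qed
  then show "bounded_up_to N (1 * B * (1 + real N) ^ 1) (Yop i f)"
    by (simp add: bounded_up_to_def)
qed simp

lemma polynomially_bounded_add:
  fixes w :: "'n::finite wop"
  assumes "polynomially_bounded w" and "polynomially_bounded w'"
  shows "polynomially_bounded (\<lambda>f u. w f u + w' f u)"
proof -
  obtain C1 R1 K1 where "C1 \<ge> 0"
    and w: "\<And>N B f. bounded_up_to (N + R1) B f \<Longrightarrow> bounded_up_to N (C1 * B * (1 + real N) ^ K1) (w f)"
    using assms(1) by (elim polynomially_boundedE) blast
  obtain C2 R2 K2 where "C2 \<ge> 0"
    and w': "\<And>N B f. bounded_up_to (N + R2) B f \<Longrightarrow> bounded_up_to N (C2 * B * (1 + real N) ^ K2) (w' f)"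
    using assms(2) by (elim polynomially_boundedE) blast
  show ?thesis
  proof (rule polynomially_boundedI[where C = "C1 + C2" and R = "max R1 R2" and K = "max K1 K2"])
    fix N :: nat and B :: real and f :: "'n fock"
    assume f: "bounded_up_to (N + max R1 R2) B f"
    define P where "P = (1 + real N) ^ max K1 K2"
    have "0 \<le> B" by (rule bounded_up_to_nonneg[OF f])
    have "(1 + real N) ^ K1 \<le> P" "(1 + real N) ^ K2 \<le> P"
      by (simp_all add: P_def power_increasing)
    with \<open>0 \<le> B\<close> \<open>C1 \<ge> 0\<close> \<open>C2 \<ge> 0\<close>
    have "bounded_up_to N (C1 * B * P) (w f)" "bounded_up_to N (C2 * B * P) (w' f)"
      by (auto intro!: bounded_up_to_mono[OF w] bounded_up_to_mono[OF w'] bounded_up_to_mono[OF f]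
          mult_left_mono)
    then show "bounded_up_to N ((C1 + C2) * B * P) (\<lambda>u. w f u + w' f u)"
      unfolding bounded_up_to_def distrib_right by (meson add_mono norm_triangle_le)
  qed (use \<open>C1 \<ge> 0\<close> \<open>C2 \<ge> 0\<close> in simp)
qed

lemma polynomially_bounded_scale:
  fixes w :: "'n::finite wop"
  assumes "polynomially_bounded w"
  shows "polynomially_bounded (\<lambda>f u. k * w f u)"
proof -
  obtain C R K where "C \<ge> 0"
    and w: "\<And>N B f. bounded_up_to (N + R) B f \<Longrightarrow> bounded_up_to N (C * B * (1 + real N) ^ K) (w f)"
    using assms by (elim polynomially_boundedE) blast
  show ?thesis
  proof (rule polynomially_boundedI[where C = "norm k * C" and R = R and K = K])
    fix N :: nat and B :: real and f :: "'n fock"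
    assume "bounded_up_to (N + R) B f"
    then have "bounded_up_to N (C * B * (1 + real N) ^ K) (w f)" by (rule w)
    then show "bounded_up_to N (norm k * C * B * (1 + real N) ^ K) (\<lambda>u. k * w f u)"
      by (simp add: bounded_up_to_def norm_mult mult.assoc mult_left_mono)
  qed (use \<open>C \<ge> 0\<close> in simp)
qed

lemma polynomially_bounded_comp:
  fixes w :: "'n::finite wop"
  assumes "polynomially_bounded w" and "polynomially_bounded w'"
  shows "polynomially_bounded (w \<circ> w')"
proof -
  obtain C1 R1 K1 where "C1 \<ge> 0"
    and w: "\<And>N B f. bounded_up_to (N + R1) B f \<Longrightarrow> bounded_up_to N (C1 * B * (1 + real N) ^ K1) (w f)"
    using assms(1) by (elim polynomially_boundedE) blast
  obtain C2 R2 K2 where "C2 \<ge> 0"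
    and w': "\<And>N B f. bounded_up_to (N + R2) B f \<Longrightarrow> bounded_up_to N (C2 * B * (1 + real N) ^ K2) (w' f)"
    using assms(2) by (elim polynomially_boundedE) blast
  show ?thesis
  proof (rule polynomially_boundedI
      [where C = "C1 * C2 * (1 + real R1) ^ K2" and R = "R1 + R2" and K = "K1 + K2"])
    fix N :: nat and B :: real and f :: "'n fock"
    assume f: "bounded_up_to (N + (R1 + R2)) B f"
    have "0 \<le> B" by (rule bounded_up_to_nonneg[OF f])
    from f have "bounded_up_to (N + R1) (C2 * B * (1 + real (N + R1)) ^ K2) (w' f)"
      by (intro w') (simp add: add.assoc)
    then have
      "bounded_up_to N (C1 * (C2 * B * (1 + real (N + R1)) ^ K2) * (1 + real N) ^ K1) (w (w' f))"
      by (rule w)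
    moreover have "C1 * (C2 * B * (1 + real (N + R1)) ^ K2) * (1 + real N) ^ K1
        \<le> C1 * (C2 * B * ((1 + real R1) * (1 + real N)) ^ K2) * (1 + real N) ^ K1"
      using \<open>C1 \<ge> 0\<close> \<open>C2 \<ge> 0\<close> \<open>0 \<le> B\<close>
      by (intro mult_right_mono mult_left_mono power_mono) (auto simp: algebra_simps)
    ultimately show
      "bounded_up_to N (C1 * C2 * (1 + real R1) ^ K2 * B * (1 + real N) ^ (K1 + K2)) ((w \<circ> w') f)"
      by (auto elim!: bounded_up_to_mono simp: power_mult_distrib power_add mult_ac)
  qed (use \<open>C1 \<ge> 0\<close> \<open>C2 \<ge> 0\<close> in simp)
qed

lemma polynomially_bounded_weyl: "w \<in> weyl \<Longrightarrow> polynomially_bounded (w :: 'n::finite wop)"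
proof (induction rule: weyl.induct)
  case one
  show ?case by (rule polynomially_bounded_id)
next
  case (genX i)
  show ?case by (rule polynomially_bounded_Xop)
next
  case (genY i)
  show ?case by (rule polynomially_bounded_Yop)
next
  case (add w w')
  from add.IH show ?case by (rule polynomially_bounded_add)
next
  case (smult w c)
  from smult.IH show ?case by (rule polynomially_bounded_scale)
next
  case (mult w w')
  from mult.IH show ?case by (rule polynomially_bounded_comp)
qed

lemma weyl_diagonal_bound:
  fixes w :: "'n::finite wop"
  assumes "w \<in> weyl"
  obtains C K where "C \<ge> 0" and "\<And>u. norm (w (basisv u) u) \<le> C * (1 + real (sum u UNIV)) ^ K"
proof -
  obtain C R K where "C \<ge> 0"
    and w: "\<And>N B f. bounded_up_to (N + R) B f \<Longrightarrow> bounded_up_to N (C * B * (1 + real N) ^ K) (w f)"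
    using polynomially_bounded_weyl[OF assms] by (elim polynomially_boundedE) blast
  have "bounded_up_to (sum u UNIV + R) 1 (basisv u)" for u
    by (simp add: bounded_up_to_def basisv_def)
  then have "bounded_up_to (sum u UNIV) (C * 1 * (1 + real (sum u UNIV)) ^ K) (w (basisv u))" for u
    by (rule w)
  then have "norm (w (basisv u) u) \<le> C * (1 + real (sum u UNIV)) ^ K" for u
    unfolding bounded_up_to_def by simp
  with \<open>C \<ge> 0\<close> show ?thesis by (rule that)
qed

lemma summable_poly_times_geometric:
  fixes q :: real
  assumes "0 \<le> q" and "q < 1"
  shows "summable (\<lambda>n. (1 + real n) ^ K * q ^ n)"
proof -
  define r where "r = sqrt q"
  have r: "0 \<le> r" "r < 1" "q = r * r" using assms by (auto simp: r_def)
  have "eventually (\<lambda>n. (1 + real n) ^ K * r ^ n < 1) sequentially"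
  proof (cases "r = 0")
    case True
    show ?thesis using eventually_gt_at_top[of 0] by eventually_elim (simp add: True power_0_left)
  next
    case False
    with r have "(\<lambda>n. (1 + real n) ^ K * r ^ n) \<longlonglongrightarrow> 0"
      by real_asymp
    then show ?thesis by (rule order_tendstoD) simp
  qed
  then have "eventually (\<lambda>n. norm ((1 + real n) ^ K * q ^ n) \<le> r ^ n) sequentially"
  proof eventually_elim
    case (elim n)
    have "norm ((1 + real n) ^ K * q ^ n) = ((1 + real n) ^ K * r ^ n) * r ^ n"
      using r by (simp add: power_mult_distrib)
    also have "\<dots> \<le> r ^ n" using elim r by (simp add: mult_left_le_one_le)
    finally show ?case .
  qed
  then show ?thesis
    by (rule summable_comparison_test_ev) (use r in \<open>simp add: summable_geometric\<close>)
qed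

lemma one_add_sum_le_prod:
  fixes x :: "'a \<Rightarrow> real"
  assumes "finite A" and "\<And>j. j \<in> A \<Longrightarrow> x j \<ge> 0"
  shows "1 + sum x A \<le> (\<Prod>j\<in>A. 1 + x j)"
  using assms
proof (induction A rule: finite_induct)
  case (insert y F)
  then have "1 + sum x (insert y F) \<le> (1 + x y) * (1 + sum x F)"
    by (simp add: algebra_simps sum_nonneg)
  also have "\<dots> \<le> (1 + x y) * (\<Prod>j\<in>F. 1 + x j)"
    using insert by (intro mult_left_mono) auto
  finally show ?case using insert by simp
qed simp

lemma summable_norm_prod_poly_geometric:
  fixes q :: "'n::finite \<Rightarrow> real"
  assumes "\<And>j. 0 \<le> q j" and "\<And>j. q j < 1"
  shows "(\<lambda>u. norm (\<Prod>j\<in>UNIV. (1 + real (u j)) ^ K * q j ^ u j)) summable_on UNIV"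
proof -
  have "Infinite_Set_Sum.abs_summable_on (\<lambda>k. (1 + real k) ^ K * q j ^ k) UNIV" for j
  proof -
    have "summable (\<lambda>k. norm (norm ((1 + real k) ^ K * q j ^ k)))"
      using summable_poly_times_geometric[OF assms(1,2)[of j], of K] assms(1)[of j] by simp
    then have "(\<lambda>k. norm ((1 + real k) ^ K * q j ^ k)) summable_on UNIV"
      by (rule norm_summable_imp_summable_on)
    then show ?thesis
      by (metis abs_summable_equivalent)
  qed
  then have "Infinite_Set_Sum.abs_summable_on (\<lambda>u. \<Prod>j\<in>UNIV. (1 + real (u j)) ^ K * q j ^ u j)
      (PiE UNIV (\<lambda>_. UNIV))"
    by (intro abs_summable_on_prod_PiE[where f = "\<lambda>j k. (1 + real k) ^ K * q j ^ k"]) auto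
  then show ?thesis
    unfolding PiE_UNIV by (simp only: abs_summable_equivalent)
qed

lemma trace_summable:
  assumes apos: "\<And>j. a j > 0" and w: "w \<in> weyl"
  shows "(\<lambda>u. trace_weight a c u * w (basisv u) u) summable_on UNIV"
proof -
  obtain C K where "C \<ge> 0" and bound: "\<And>u. norm (w (basisv u) u) \<le> C * (1 + real (sum u UNIV)) ^ K"
    using weyl_diagonal_bound[OF w] by blast
  define A where "A = norm (exp (2 * pi * (c - (\<Sum>j\<in>UNIV. complex_of_real (a j)) / 2)))"
  define q where "q j = exp (- 2 * pi * a j)" for j
  define P where "P u = (\<Prod>j\<in>UNIV. (1 + real (u j)) ^ K * q j ^ u j)" for u
  have "(\<lambda>u. norm (P u)) summable_on UNIV"
    unfolding P_def using apos by (intro summable_norm_prod_poly_geometric) (simp_all add: q_def)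
  then have majorant: "(\<lambda>u. norm (A * C * P u)) summable_on UNIV"
    using summable_on_cmult_right[of _ UNIV "A * C"] \<open>C \<ge> 0\<close> by (simp add: abs_mult A_def)
  have "norm (trace_weight a c u * w (basisv u) u) \<le> norm (A * C * P u)" for u
  proof -
    have "1 + real (sum u UNIV) \<le> (\<Prod>j\<in>UNIV. 1 + real (u j))"
      using one_add_sum_le_prod[of UNIV "\<lambda>j. real (u j)"] by simp
    then have "(1 + real (sum u UNIV)) ^ K \<le> (\<Prod>j\<in>UNIV. (1 + real (u j)) ^ K)"
      unfolding prod_power_distrib[symmetric] by (rule power_mono) (simp del: of_nat_sum)
    then have "norm (w (basisv u) u) \<le> C * (\<Prod>j\<in>UNIV. (1 + real (u j)) ^ K)"
      using bound[of u] \<open>C \<ge> 0\<close> by (meson mult_left_mono order_trans)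
    moreover have "norm (trace_weight a c u) = A * (\<Prod>j\<in>UNIV. q j ^ u j)"
      by (simp add: trace_weight_eq norm_mult norm_multi_power A_def)
        (simp add: multi_power_def twist_y_def q_def)
    ultimately have "norm (trace_weight a c u * w (basisv u) u) \<le>
        A * (\<Prod>j\<in>UNIV. q j ^ u j) * (C * (\<Prod>j\<in>UNIV. (1 + real (u j)) ^ K))"
      by (simp add: norm_mult mult_left_mono prod_nonneg A_def q_def)
    also have "\<dots> = norm (A * C * P u)"
      using \<open>C \<ge> 0\<close> by (simp add: P_def q_def prod.distrib abs_mult prod_nonneg A_def mult_ac)
    finally show ?thesis .
  qed
  then have "(\<lambda>u. norm (trace_weight a c u * w (basisv u) u)) summable_on UNIV"
    by (rule Infinite_Sum.abs_summable_on_comparison_test[OF majorant])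
  then show ?thesis by (rule abs_summable_summable)
qed

section \<open>The twisted trace property\<close>

lemma Tr_m_add:
  assumes "\<And>j. a j > 0" and "w \<in> weyl" and "w' \<in> weyl"
  shows "Tr_m a c (\<lambda>f u. w f u + w' f u) = Tr_m a c w + Tr_m a c w'"
proof -
  have "Tr_m a c (\<lambda>f u. w f u + w' f u) =
      infsum (\<lambda>u. trace_weight a c u * w (basisv u) u + trace_weight a c u * w' (basisv u) u) UNIV"
    unfolding Tr_m_eq by (simp add: distrib_left)
  also have "\<dots> = Tr_m a c w + Tr_m a c w'"
    unfolding Tr_m_eq using assms by (intro infsum_add trace_summable)
  finally show ?thesis .
qed

lemma Tr_m_scale: "Tr_m a c (\<lambda>f u. k * w f u) = k * Tr_m a c w"
  unfolding Tr_m_eq by (simp add: mult.left_commute infsum_cmult_right')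

lemma Tr_m_linear:
  assumes "\<And>j. a j > 0"
  shows "weyl_linear (Tr_m a c)"
  unfolding weyl_linear_def by (simp add: Tr_m_add[OF assms] Tr_m_scale)

lemma infsum_shift_coordinate:
  fixes F G :: "('n \<Rightarrow> nat) \<Rightarrow> 'a::{comm_monoid_add, t2_space}"
  assumes "\<And>u. u i = 0 \<Longrightarrow> G u = 0" and "\<And>u. G (u(i := Suc (u i))) = F u"
  shows "infsum F UNIV = infsum G UNIV"
proof -
  have "infsum G UNIV = infsum G {u. u i \<noteq> 0}"
    by (rule infsum_cong_neutral) (use assms(1) in auto)
  moreover have "infsum F UNIV = infsum G {u. u i \<noteq> 0}"
    by (rule infsum_reindex_bij_witness
        [where i = "\<lambda>v. v(i := v i - 1)" and j = "\<lambda>u. u(i := Suc (u i))"])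
      (simp_all add: assms(2))
  ultimately show ?thesis by simp
qed

lemma Xop_basisv: "Xop i (basisv u) = basisv (u(i := Suc (u i)))"
proof (intro ext)
  fix v
  have "v i \<noteq> 0 \<Longrightarrow> v(i := v i - 1) = u \<longleftrightarrow> v = u(i := Suc (u i))"
    by auto
  then show "Xop i (basisv u) v = basisv (u(i := Suc (u i))) v"
    by (auto simp: Xop_def basisv_def)
qed

lemma Yop_basisv: "Yop i (basisv u) = (\<lambda>v. - of_nat (u i) * basisv (u(i := u i - 1)) v)"
proof (intro ext)
  fix v
  show "Yop i (basisv u) v = - of_nat (u i) * basisv (u(i := u i - 1)) v"
  proof (cases "v(i := v i + 1) = u")
    case True
    then have "u i = Suc (v i)" and "v = u(i := u i - 1)" by auto
    then show ?thesis using True by (simp add: Yop_def basisv_def)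
  next
    case False
    then have "u i = 0 \<or> v \<noteq> u(i := u i - 1)" by auto
    then show ?thesis using False by (auto simp: Yop_def basisv_def)
  qed
qed

lemma Tr_m_comp_Xop:
  fixes a :: "'n::finite \<Rightarrow> real"
  shows "Tr_m a c (w \<circ> Xop i) = Tr_m a c (twist_aut a (Xop i) \<circ> w)"
  unfolding Tr_m_eq comp_apply Xop_basisv twist_aut_Xop
proof (rule infsum_shift_coordinate[where i = i])
  fix u :: "'n \<Rightarrow> nat"
  show "u i = 0 \<Longrightarrow> trace_weight a c u * (twist_x a i * Xop i (w (basisv u)) u) = 0"
    by (simp add: Xop_def)
  show "trace_weight a c (u(i := Suc (u i))) *
      (twist_x a i * Xop i (w (basisv (u(i := Suc (u i))))) (u(i := Suc (u i)))) =
      trace_weight a c u * w (basisv (u(i := Suc (u i)))) u"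
    by (simp add: trace_weight_eq multi_power_Suc Xop_def mult.left_commute twist_x_mult_twist_y)
qed

lemma Tr_m_comp_Yop:
  fixes a :: "'n::finite \<Rightarrow> real"
  assumes "w \<in> weyl"
  shows "Tr_m a c (w \<circ> Yop i) = Tr_m a c (twist_aut a (Yop i) \<circ> w)"
  unfolding Tr_m_eq comp_apply Yop_basisv twist_aut_Yop weyl_scale[OF assms]
proof (rule infsum_shift_coordinate[where i = i, symmetric])
  fix u :: "'n \<Rightarrow> nat"
  show "u i = 0 \<Longrightarrow> trace_weight a c u * (- of_nat (u i) * w (basisv (u(i := u i - 1))) u) = 0"
    by simp
  show "trace_weight a c (u(i := Suc (u i))) *
      (- of_nat ((u(i := Suc (u i))) i) *
        w (basisv ((u(i := Suc (u i)))(i := (u(i := Suc (u i))) i - 1))) (u(i := Suc (u i)))) =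
      trace_weight a c u * (twist_y a i * Yop i (w (basisv u)) u)"
    by (simp add: trace_weight_eq multi_power_Suc Yop_def mult_ac)
qed

lemma Tr_m_twisted:
  fixes a :: "'n::finite \<Rightarrow> real"
  assumes apos: "\<And>j. a j > 0" and "w2 \<in> weyl" and "w1 \<in> weyl"
  shows "Tr_m a c (w1 \<circ> w2) = Tr_m a c (twist_aut a w2 \<circ> w1)"
  using assms(2,3)
proof (induction arbitrary: w1 rule: weyl.induct)
  case one
  show ?case by (simp only: twist_aut_id comp_id id_comp)
next
  case (genX i)
  show ?case by (rule Tr_m_comp_Xop)
next
  case (genY i)
  from genY.prems show ?case by (rule Tr_m_comp_Yop)
next
  case (add w w')
  have "w1 \<circ> (\<lambda>f u. w f u + w' f u) = (\<lambda>f u. (w1 \<circ> w) f u + (w1 \<circ> w') f u)"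
    using add.prems by (simp add: fun_eq_iff weyl_add)
  moreover have "twist_aut a (\<lambda>f u. w f u + w' f u) \<circ> w1 =
      (\<lambda>f u. (twist_aut a w \<circ> w1) f u + (twist_aut a w' \<circ> w1) f u)"
    by (simp add: twist_aut_add fun_eq_iff)
  moreover have "w1 \<circ> w \<in> weyl" "w1 \<circ> w' \<in> weyl" "twist_aut a w \<circ> w1 \<in> weyl" "twist_aut a w' \<circ> w1 \<in> weyl"
    using add by (simp_all add: weyl.mult twist_aut_weyl)
  ultimately show ?case
    by (simp only: Tr_m_add[OF apos] add.IH[OF add.prems])
next
  case (smult w k)
  have "w1 \<circ> (\<lambda>f u. k * w f u) = (\<lambda>f u. k * (w1 \<circ> w) f u)"
    using smult.prems by (simp add: fun_eq_iff weyl_scale)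
  moreover have "twist_aut a (\<lambda>f u. k * w f u) \<circ> w1 = (\<lambda>f u. k * (twist_aut a w \<circ> w1) f u)"
    by (simp add: twist_aut_scale fun_eq_iff)
  ultimately show ?case
    by (simp only: Tr_m_scale smult.IH[OF smult.prems])
next
  case (mult w w')
  have "Tr_m a c (w1 \<circ> (w \<circ> w')) = Tr_m a c ((w1 \<circ> w) \<circ> w')"
    by (simp only: o_assoc)
  also have "\<dots> = Tr_m a c (twist_aut a w' \<circ> (w1 \<circ> w))"
    by (rule mult.IH(2)) (rule weyl.mult[OF mult.prems mult.hyps(1)])
  also have "\<dots> = Tr_m a c ((twist_aut a w' \<circ> w1) \<circ> w)"
    by (simp only: o_assoc)
  also have "\<dots> = Tr_m a c (twist_aut a w \<circ> (twist_aut a w' \<circ> w1))"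
    by (rule mult.IH(1)) (rule weyl.mult[OF twist_aut_weyl[OF mult.hyps(2)] mult.prems])
  also have "\<dots> = Tr_m a c (twist_aut a (w \<circ> w') \<circ> w1)"
    by (simp only: twist_aut_comp o_assoc)
  finally show ?case .
qed

lemma twisted_trace_Tr_m:
  fixes a :: "'n::finite \<Rightarrow> real"
  assumes "\<And>j. a j > 0"
  shows "twisted_trace (twist_aut a) (Tr_m a c)"
  unfolding twisted_trace_def using Tr_m_linear[of a, OF assms] Tr_m_twisted[of a, OF assms] by blast

section \<open>Normally ordered monomials\<close>

definition Xpow :: "('n::finite \<Rightarrow> nat) \<Rightarrow> 'n wop" where
  "Xpow \<alpha> f v = (if \<forall>j. \<alpha> j \<le> v j then f (\<lambda>j. v j - \<alpha> j) else 0)"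

text \<open>Since y acts as -d/dx, y^b x^(n+b) = y_coeff b n * x^n.\<close>
definition y_coeff :: "nat \<Rightarrow> nat \<Rightarrow> complex" where
  "y_coeff b n = (-1) ^ b * pochhammer (of_nat n + 1) b"

definition Ypow :: "('n::finite \<Rightarrow> nat) \<Rightarrow> 'n wop" where
  "Ypow \<beta> f v = (\<Prod>j\<in>UNIV. y_coeff (\<beta> j) (v j)) * f (\<lambda>j. v j + \<beta> j)"

lemma y_coeff_Suc_left: "y_coeff (Suc b) n = - of_nat (n + 1) * y_coeff b (Suc n)"
  by (simp add: y_coeff_def pochhammer_rec add_ac) (simp add: algebra_simps)

lemma y_coeff_Suc_right: "y_coeff (Suc b) n = - of_nat (n + b + 1) * y_coeff b n"
  by (simp add: y_coeff_def pochhammer_rec' add_ac) (simp add: algebra_simps)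

lemma Xpow_zero: "Xpow (\<lambda>_. 0) = id"
  by (simp add: Xpow_def fun_eq_iff)

lemma Ypow_zero: "Ypow (\<lambda>_. 0) = id"
  by (simp add: Ypow_def y_coeff_def fun_eq_iff)

lemma Xop_comp_Xpow: "Xop i \<circ> Xpow \<alpha> = Xpow (\<alpha>(i := Suc (\<alpha> i)))"
proof (intro ext)
  fix f v
  show "(Xop i \<circ> Xpow \<alpha>) f v = Xpow (\<alpha>(i := Suc (\<alpha> i))) f v"
  proof (cases "v i = 0")
    case True
    then have "\<not> (\<forall>j. (\<alpha>(i := Suc (\<alpha> i))) j \<le> v j)" by (metis fun_upd_same not_less_eq_eq zero_le)
    then have "Xpow (\<alpha>(i := Suc (\<alpha> i))) f v = 0" unfolding Xpow_def by (rule if_not_P)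
    with True show ?thesis by (simp add: Xop_def)
  next
    case False
    then have "(\<forall>j. \<alpha> j \<le> (v(i := v i - 1)) j) \<longleftrightarrow> (\<forall>j. (\<alpha>(i := Suc (\<alpha> i))) j \<le> v j)"
      by (auto simp: le_diff_conv2)
    moreover have "(\<lambda>j. (v(i := v i - 1)) j - \<alpha> j) = (\<lambda>j. v j - (\<alpha>(i := Suc (\<alpha> i))) j)"
      by (auto simp: fun_eq_iff)
    ultimately show ?thesis using False by (simp add: Xop_def Xpow_def)
  qed
qed

lemma Yop_comp_Ypow: "Yop i \<circ> Ypow \<beta> = Ypow (\<beta>(i := Suc (\<beta> i)))"
proof (intro ext)
  fix f v
  have "(\<Prod>j\<in>UNIV. y_coeff ((\<beta>(i := Suc (\<beta> i))) j) (v j)) =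
      - of_nat (v i + 1) * (\<Prod>j\<in>UNIV. y_coeff (\<beta> j) ((v(i := v i + 1)) j))"
    using prod_UNIV_fun_upd[where F = "\<lambda>j b. y_coeff b (v j)" and u = \<beta>]
      prod_UNIV_fun_upd[where F = "\<lambda>j n. y_coeff (\<beta> j) n" and u = v]
    by (simp add: y_coeff_Suc_left)
  moreover have "(\<lambda>j. (v(i := v i + 1)) j + \<beta> j) = (\<lambda>j. v j + (\<beta>(i := Suc (\<beta> i))) j)"
    by (simp add: fun_eq_iff)
  ultimately show "(Yop i \<circ> Ypow \<beta>) f v = Ypow (\<beta>(i := Suc (\<beta> i))) f v"
    by (simp add: Yop_def Ypow_def)
qed

lemma Ypow_comp_Yop: "Ypow \<beta> \<circ> Yop i = Ypow (\<beta>(i := Suc (\<beta> i)))"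
proof (intro ext)
  fix f v
  have "(\<Prod>j\<in>UNIV. y_coeff ((\<beta>(i := Suc (\<beta> i))) j) (v j)) =
      - of_nat (v i + \<beta> i + 1) * (\<Prod>j\<in>UNIV. y_coeff (\<beta> j) (v j))"
    using prod_UNIV_fun_upd[where F = "\<lambda>j b. y_coeff b (v j)" and u = \<beta>]
      prod.remove[of UNIV i "\<lambda>j. y_coeff (\<beta> j) (v j)"]
    by (simp add: y_coeff_Suc_right)
  moreover have "(\<lambda>j. v j + \<beta> j)(i := v i + \<beta> i + 1) = (\<lambda>j. v j + (\<beta>(i := Suc (\<beta> i))) j)"
    by (simp add: fun_eq_iff)
  ultimately show "(Ypow \<beta> \<circ> Yop i) f v = Ypow (\<beta>(i := Suc (\<beta> i))) f v"
    by (simp add: Yop_def Ypow_def)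
qed

lemma Xpow_lower:
  assumes "0 < \<alpha> i"
  shows "Xpow (\<alpha>(i := \<alpha> i - 1)) f v = Xpow \<alpha> f (v(i := v i + 1))"
proof -
  have "(\<forall>j. (\<alpha>(i := \<alpha> i - 1)) j \<le> v j) \<longleftrightarrow> (\<forall>j. \<alpha> j \<le> (v(i := v i + 1)) j)"
    using assms by (auto simp: le_diff_conv)
  moreover have "(\<lambda>j. v j - (\<alpha>(i := \<alpha> i - 1)) j) = (\<lambda>j. (v(i := v i + 1)) j - \<alpha> j)"
    using assms by (auto simp: fun_eq_iff)
  ultimately show ?thesis by (simp only: Xpow_def)
qed

lemma Xpow_Yop_apply:
  "Xpow \<alpha> (Yop i f) v = (of_nat (\<alpha> i) - of_nat (v i) - 1) * Xpow \<alpha> f (v(i := v i + 1))"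
proof (cases "\<forall>j. \<alpha> j \<le> v j")
  case True
  then have "\<alpha> i \<le> v i" and "\<forall>j. \<alpha> j \<le> (v(i := v i + 1)) j" by (auto intro: le_SucI)
  moreover have "(\<lambda>j. v j - \<alpha> j)(i := v i - \<alpha> i + 1) = (\<lambda>j. (v(i := v i + 1)) j - \<alpha> j)"
    using \<open>\<alpha> i \<le> v i\<close> by (auto simp: fun_eq_iff)
  ultimately show ?thesis
    using True by (simp add: Xpow_def Yop_def of_nat_diff algebra_simps)
next
  case False
  then have "Xpow \<alpha> (Yop i f) v = 0" unfolding Xpow_def by (rule if_not_P)
  moreover have "\<alpha> i = v i + 1" if "\<forall>j. \<alpha> j \<le> (v(i := v i + 1)) j"
    using that False by (metis fun_upd_apply le_SucE Suc_eq_plus1)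
  ultimately show ?thesis by (auto simp: Xpow_def simp del: fun_upd_apply)
qed

lemma Yop_comp_Xpow:
  "Yop i \<circ> Xpow \<alpha> = (\<lambda>f v. Xpow \<alpha> (Yop i f) v - of_nat (\<alpha> i) * Xpow (\<alpha>(i := \<alpha> i - 1)) f v)"
proof (intro ext)
  fix f v
  define G where "G = Xpow \<alpha> f (v(i := v i + 1))"
  have L: "(Yop i \<circ> Xpow \<alpha>) f v = - of_nat (v i + 1) * G"
    by (simp add: Yop_def G_def)
  have R1: "Xpow \<alpha> (Yop i f) v = (of_nat (\<alpha> i) - of_nat (v i) - 1) * G"
    by (simp only: Xpow_Yop_apply G_def)
  have R2: "of_nat (\<alpha> i) * Xpow (\<alpha>(i := \<alpha> i - 1)) f v = of_nat (\<alpha> i) * G"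
    using Xpow_lower[of \<alpha> i f v] by (cases "\<alpha> i = 0") (simp_all add: G_def)
  show "(Yop i \<circ> Xpow \<alpha>) f v =
      Xpow \<alpha> (Yop i f) v - of_nat (\<alpha> i) * Xpow (\<alpha>(i := \<alpha> i - 1)) f v"
    unfolding L R1 R2 by (simp add: algebra_simps)
qed

lemma Xop_comp_Yop_apply: "(Xop i \<circ> Yop i) f v = - of_nat (v i) * f v"
  by (simp add: Xop_def Yop_def)

lemma twist_aut_Xop_comp_Yop: "twist_aut a (Xop i \<circ> Yop i) = Xop i \<circ> Yop i"
  by (simp add: twist_aut_comp twist_aut_Xop twist_aut_Yop fun_eq_iff Xop_def mult.assoc
      twist_x_mult_twist_y)

lemma Xop_comp_Yop_comm_monomial:
  "(Xop i \<circ> Yop i) \<circ> (Xpow \<alpha> \<circ> Ypow \<beta>) =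
     (\<lambda>f v. (Xpow \<alpha> \<circ> Ypow \<beta> \<circ> (Xop i \<circ> Yop i)) f v
       + (of_nat (\<beta> i) - of_nat (\<alpha> i)) * (Xpow \<alpha> \<circ> Ypow \<beta>) f v)"
proof (intro ext)
  fix f v
  show "((Xop i \<circ> Yop i) \<circ> (Xpow \<alpha> \<circ> Ypow \<beta>)) f v =
      (Xpow \<alpha> \<circ> Ypow \<beta> \<circ> (Xop i \<circ> Yop i)) f v
        + (of_nat (\<beta> i) - of_nat (\<alpha> i)) * (Xpow \<alpha> \<circ> Ypow \<beta>) f v"
  proof (cases "\<forall>j. \<alpha> j \<le> v j")
    case True
    then have "\<alpha> i \<le> v i" "\<alpha> i \<le> \<beta> i + v i" by (auto simp: trans_le_add2)
    with True show ?thesis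
      by (simp add: Xop_comp_Yop_apply[unfolded comp_apply] Xpow_def Ypow_def of_nat_diff algebra_simps)
  qed (auto simp: Xop_comp_Yop_apply[unfolded comp_apply] Xpow_def)
qed

lemma Xpow_weyl: "Xpow \<alpha> \<in> weyl"
proof (induction \<alpha> rule: multi_index_induct)
  case zero
  then show ?case by (metis Xpow_zero weyl.one)
next
  case (Suc \<alpha> i)
  then show ?case by (metis Xop_comp_Xpow weyl.genX weyl.mult)
qed

lemma Ypow_weyl: "Ypow \<beta> \<in> weyl"
proof (induction \<beta> rule: multi_index_induct)
  case zero
  then show ?case by (metis Ypow_zero weyl.one)
next
  case (Suc \<beta> i)
  then show ?case by (metis Yop_comp_Ypow weyl.genY weyl.mult)
qed

lemma monomial_weyl: "Xpow \<alpha> \<circ> Ypow \<beta> \<in> weyl"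
  by (rule weyl.mult[OF Xpow_weyl Ypow_weyl])

inductive_set normal_span :: "'n::finite wop set" where
  monomial: "Xpow \<alpha> \<circ> Ypow \<beta> \<in> normal_span"
| add: "s \<in> normal_span \<Longrightarrow> s' \<in> normal_span \<Longrightarrow> (\<lambda>f u. s f u + s' f u) \<in> normal_span"
| scale: "s \<in> normal_span \<Longrightarrow> (\<lambda>f u. k * s f u) \<in> normal_span"

lemma normal_span_weyl: "s \<in> normal_span \<Longrightarrow> s \<in> weyl"
  by (induction rule: normal_span.induct) (blast intro: monomial_weyl weyl.add weyl.smult)+

lemma weyl_comp_normal_span_of_monomials:
  assumes "g \<in> weyl" and "\<And>\<alpha> \<beta>. g \<circ> (Xpow \<alpha> \<circ> Ypow \<beta>) \<in> normal_span" and "s \<in> normal_span"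
  shows "g \<circ> s \<in> normal_span"
  using assms(3)
proof (induction rule: normal_span.induct)
  case (monomial \<alpha> \<beta>)
  show ?case by (rule assms(2))
next
  case (add s s')
  have "g \<circ> (\<lambda>f u. s f u + s' f u) = (\<lambda>f u. (g \<circ> s) f u + (g \<circ> s') f u)"
    by (simp add: fun_eq_iff weyl_add[OF assms(1)])
  with add.IH show ?case by (simp add: normal_span.add)
next
  case (scale s k)
  have "g \<circ> (\<lambda>f u. k * s f u) = (\<lambda>f u. k * (g \<circ> s) f u)"
    by (simp add: fun_eq_iff weyl_scale[OF assms(1)])
  with scale.IH show ?case by (simp add: normal_span.scale)
qed

lemma Xop_comp_monomial: "Xop i \<circ> (Xpow \<alpha> \<circ> Ypow \<beta>) = Xpow (\<alpha>(i := Suc (\<alpha> i))) \<circ> Ypow \<beta>"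
  by (simp only: o_assoc Xop_comp_Xpow)

lemma Yop_comp_monomial:
  "Yop i \<circ> (Xpow \<alpha> \<circ> Ypow \<beta>) =
     (\<lambda>f v. (Xpow \<alpha> \<circ> Ypow (\<beta>(i := Suc (\<beta> i)))) f v
       + (- of_nat (\<alpha> i)) * (Xpow (\<alpha>(i := \<alpha> i - 1)) \<circ> Ypow \<beta>) f v)"
proof (intro ext)
  fix f v
  have "(Yop i \<circ> (Xpow \<alpha> \<circ> Ypow \<beta>)) f v = ((Yop i \<circ> Xpow \<alpha>) \<circ> Ypow \<beta>) f v"
    by simp
  also have "\<dots> = Xpow \<alpha> (Yop i (Ypow \<beta> f)) v - of_nat (\<alpha> i) * Xpow (\<alpha>(i := \<alpha> i - 1)) (Ypow \<beta> f) v"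
    by (simp only: Yop_comp_Xpow comp_apply)
  also have "Yop i (Ypow \<beta> f) = Ypow (\<beta>(i := Suc (\<beta> i))) f"
    by (metis Yop_comp_Ypow comp_apply)
  finally show "(Yop i \<circ> (Xpow \<alpha> \<circ> Ypow \<beta>)) f v = (Xpow \<alpha> \<circ> Ypow (\<beta>(i := Suc (\<beta> i)))) f v
      + (- of_nat (\<alpha> i)) * (Xpow (\<alpha>(i := \<alpha> i - 1)) \<circ> Ypow \<beta>) f v"
    by (simp only: comp_apply diff_conv_add_uminus mult_minus_left)
qed

lemma weyl_comp_normal_span:
  "w \<in> weyl \<Longrightarrow> s \<in> normal_span \<Longrightarrow> w \<circ> s \<in> normal_span"
proof (induction arbitrary: s rule: weyl.induct)
  case one
  then show ?case by simp
next
  case (genX i)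
  show ?case
    by (rule weyl_comp_normal_span_of_monomials[OF weyl.genX _ genX])
      (simp only: Xop_comp_monomial normal_span.monomial)
next
  case (genY i)
  show ?case
    by (rule weyl_comp_normal_span_of_monomials[OF weyl.genY _ genY], unfold Yop_comp_monomial)
      (intro normal_span.add normal_span.scale normal_span.monomial)
next
  case (add w w')
  have "(\<lambda>f u. w f u + w' f u) \<circ> s = (\<lambda>f u. (w \<circ> s) f u + (w' \<circ> s) f u)"
    by (simp add: fun_eq_iff)
  with add show ?case by (simp add: normal_span.add)
next
  case (smult w k)
  have "(\<lambda>f u. k * w f u) \<circ> s = (\<lambda>f u. k * (w \<circ> s) f u)"
    by (simp add: fun_eq_iff)
  with smult show ?case by (simp add: normal_span.scale)
next
  case (mult w w')
  then show ?case by (simp add: o_assoc[symmetric])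
qed

lemma weyl_subset_normal_span: "w \<in> weyl \<Longrightarrow> w \<in> normal_span"
  using weyl_comp_normal_span[OF _ normal_span.monomial[of "\<lambda>_. 0" "\<lambda>_. 0"]]
  by (simp add: Xpow_zero Ypow_zero)

section \<open>Uniqueness\<close>

lemma twisted_trace_diff:
  assumes "twisted_trace \<omega> T" and "twisted_trace \<omega> S"
  shows "twisted_trace \<omega> (\<lambda>w. T w - k * S w)"
  using assms by (simp add: twisted_trace_def weyl_linear_def algebra_simps)

context
  fixes a :: "'n::finite \<Rightarrow> real" and T :: "'n wop \<Rightarrow> complex"
  assumes T: "twisted_trace (twist_aut a) T"
begin

lemma twisted_trace_add: "w \<in> weyl \<Longrightarrow> w' \<in> weyl \<Longrightarrow> T (\<lambda>f u. w f u + w' f u) = T w + T w'"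
  using T by (simp add: twisted_trace_def weyl_linear_def)

lemma twisted_trace_scale: "w \<in> weyl \<Longrightarrow> T (\<lambda>f u. k * w f u) = k * T w"
  using T by (simp add: twisted_trace_def weyl_linear_def)

lemma twisted_trace_comm: "w1 \<in> weyl \<Longrightarrow> w2 \<in> weyl \<Longrightarrow> T (w1 \<circ> w2) = T (twist_aut a w2 \<circ> w1)"
  using T by (simp add: twisted_trace_def)

lemma twisted_trace_offdiagonal:
  assumes "\<alpha> \<noteq> \<beta>"
  shows "T (Xpow \<alpha> \<circ> Ypow \<beta>) = 0"
proof -
  obtain i where i: "\<alpha> i \<noteq> \<beta> i" using assms by auto
  define M where "M = Xpow \<alpha> \<circ> Ypow \<beta>"
  define N where "N = Xop i \<circ> Yop i"
  have M: "M \<in> weyl" and N: "N \<in> weyl"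
    by (simp_all add: M_def N_def monomial_weyl weyl.mult weyl.genX weyl.genY)
  have "T (M \<circ> N) = T (N \<circ> M)"
    using twisted_trace_comm[OF M N] by (simp add: N_def twist_aut_Xop_comp_Yop)
  also have "N \<circ> M = (\<lambda>f v. (M \<circ> N) f v + (of_nat (\<beta> i) - of_nat (\<alpha> i)) * M f v)"
    by (simp only: M_def N_def Xop_comp_Yop_comm_monomial)
  also have "T \<dots> = T (M \<circ> N) + (of_nat (\<beta> i) - of_nat (\<alpha> i)) * T M"
    by (simp only: twisted_trace_add[OF weyl.mult[OF M N] weyl.smult[OF M]] twisted_trace_scale[OF M])
  finally have "(of_nat (\<beta> i) - of_nat (\<alpha> i)) * T M = 0"
    by (metis add_cancel_right_right)
  with i have "T M = 0" by simp
  then show ?thesis by (simp only: M_def)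
qed

lemma twisted_trace_diagonal_Suc:
  "(1 - twist_y a i) * T (Xpow (\<alpha>(i := Suc (\<alpha> i))) \<circ> Ypow (\<alpha>(i := Suc (\<alpha> i)))) =
     - (twist_y a i * of_nat (Suc (\<alpha> i))) * T (Xpow \<alpha> \<circ> Ypow \<alpha>)"
proof -
  define \<alpha>' where "\<alpha>' = \<alpha>(i := Suc (\<alpha> i))"
  define M where "M = Xpow \<alpha>' \<circ> Ypow \<alpha>'"
  define M0 where "M0 = Xpow \<alpha> \<circ> Ypow \<alpha>"
  define Z where "Z = Xop i \<circ> M0"
  have M: "M \<in> weyl" and M0: "M0 \<in> weyl" and Z: "Z \<in> weyl"
    by (simp_all add: M_def M0_def Z_def monomial_weyl weyl.mult weyl.genX)
  have "Z \<circ> Yop i = (Xop i \<circ> Xpow \<alpha>) \<circ> (Ypow \<alpha> \<circ> Yop i)"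
    by (simp only: Z_def M0_def comp_assoc)
  then have "M = Z \<circ> Yop i"
    by (simp only: M_def \<alpha>'_def Xop_comp_Xpow Ypow_comp_Yop)
  have "Yop i \<circ> Z = (\<lambda>f v. M f v + (- of_nat (Suc (\<alpha> i))) * M0 f v)"
    unfolding Z_def M0_def o_assoc[symmetric] Xop_comp_monomial Yop_comp_monomial
    by (simp add: M_def \<alpha>'_def fun_eq_iff)
  have "T M = T (twist_aut a (Yop i) \<circ> Z)"
    unfolding \<open>M = Z \<circ> Yop i\<close> by (rule twisted_trace_comm[OF Z weyl.genY])
  also have "twist_aut a (Yop i) \<circ> Z = (\<lambda>f v. twist_y a i * (Yop i \<circ> Z) f v)"
    by (simp add: twist_aut_Yop fun_eq_iff)
  also have "T \<dots> = twist_y a i * T (Yop i \<circ> Z)"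
    by (rule twisted_trace_scale[OF weyl.mult[OF weyl.genY Z]])
  also have "T (Yop i \<circ> Z) = T M + (- of_nat (Suc (\<alpha> i))) * T M0"
    unfolding \<open>Yop i \<circ> Z = _\<close> by (rule twisted_trace_add[OF M weyl.smult[OF M0], THEN trans])
      (simp only: twisted_trace_scale[OF M0])
  finally have "(1 - twist_y a i) * T M = - (twist_y a i * of_nat (Suc (\<alpha> i))) * T M0"
    by (simp add: algebra_simps)
  then show ?thesis
    by (simp only: M_def M0_def \<alpha>'_def)
qed

lemma twisted_trace_vanishes:
  assumes "T id = 0" and "w \<in> weyl"
  shows "T w = 0"
proof -
  have diagonal: "T (Xpow \<alpha> \<circ> Ypow \<alpha>) = 0" for \<alpha>
  proof (induction \<alpha> rule: multi_index_induct)
    case zero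
    then show ?case using assms(1) by (simp only: Xpow_zero Ypow_zero comp_id)
  next
    case (Suc \<alpha> i)
    then show ?case
      using twisted_trace_diagonal_Suc[of i \<alpha>] twist_y_neq_1[of a i] by (simp add: o_def fun_upd_def)
  qed
  have "T s = 0" if "s \<in> normal_span" for s
    using that
  proof (induction rule: normal_span.induct)
    case (monomial \<alpha> \<beta>)
    show ?case
      using diagonal[unfolded o_def] twisted_trace_offdiagonal[unfolded o_def] by (cases "\<alpha> = \<beta>") auto
  next
    case (add s s')
    then show ?case by (simp add: twisted_trace_add normal_span_weyl)
  next
    case (scale s k)
    then show ?case by (simp add: twisted_trace_scale normal_span_weyl)
  qed
  with assms(2) show ?thesis by (simp add: weyl_subset_normal_span)
qed

end

lemma twisted_trace_unique:
  assumes T: "twisted_trace (twist_aut a) T" and S: "twisted_trace (twist_aut a) S" and "S id \<noteq> 0"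
  shows "\<exists>k. \<forall>w\<in>weyl. T w = k * S w"
proof -
  define k where "k = T id / S id"
  have "twisted_trace (twist_aut a) (\<lambda>w. T w - k * S w)"
    using T S by (rule twisted_trace_diff)
  moreover have "T id - k * S id = 0"
    using \<open>S id \<noteq> 0\<close> by (simp add: k_def)
  ultimately have "\<forall>w\<in>weyl. T w - k * S w = 0"
    using twisted_trace_vanishes by blast
  then show ?thesis by auto
qed

lemma Tr_m_id:
  assumes "\<And>j. a j > 0"
  shows "Tr_m a c id =
    exp (2 * pi * (c - (\<Sum>j\<in>UNIV. complex_of_real (a j)) / 2)) * (\<Prod>j\<in>UNIV. 1 / (1 - twist_y a j))"
proof -
  have small: "norm (twist_y a j) < 1" for j
    using assms[of j] by (simp add: twist_y_def)
  have "(\<lambda>k. norm (twist_y a j ^ k)) summable_on UNIV" for j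
    using small[of j]
    by (intro norm_summable_imp_summable_on) (simp add: norm_power summable_geometric)
  then have "infsum (\<lambda>u. multi_power (twist_y a) u) UNIV = (\<Prod>j\<in>UNIV. infsum (\<lambda>k. twist_y a j ^ k) UNIV)"
    using infsum_prod_PiE_abs[of UNIV "\<lambda>j k. twist_y a j ^ k" "\<lambda>_. UNIV"] by (simp add: multi_power_def)
  also have "\<dots> = (\<Prod>j\<in>UNIV. 1 / (1 - twist_y a j))"
  proof (rule prod.cong[OF refl])
    fix j
    have "(\<lambda>k. twist_y a j ^ k) sums (1 / (1 - twist_y a j))"
      using geometric_sums[OF small[of j]] by simp
    then show "infsum (\<lambda>k. twist_y a j ^ k) UNIV = 1 / (1 - twist_y a j)"
      using small[of j]
      by (intro infsumI norm_summable_imp_has_sum) (simp_all add: norm_power summable_geometric)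
  qed
  finally show ?thesis
    by (simp add: Tr_m_eq basisv_def trace_weight_eq infsum_cmult_right')
qed

lemma Tr_m_id_nonzero:
  assumes "\<And>j. a j > 0"
  shows "Tr_m a c id \<noteq> 0"
  by (simp add: Tr_m_id[OF assms] twist_y_neq_1)

theorem mainTheorem2:
  fixes a :: "'n::finite \<Rightarrow> real" and c :: complex
  assumes "\<forall>i. a i > 0"
  shows "(\<forall>w\<in>weyl. trV_converges (parityV \<circ> diag_exp2pi (muhat a c) \<circ> w))
       \<and> twisted_trace (twist_aut a) (Tr_m a c)
       \<and> (\<forall>T. twisted_trace (twist_aut a) T \<longrightarrow> (\<exists>k. \<forall>w\<in>weyl. T w = k * Tr_m a c w))"
proof -
  have apos: "\<And>j. a j > 0" using assms by blast
  have trace: "twisted_trace (twist_aut a) (Tr_m a c)"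
    by (rule twisted_trace_Tr_m[of a, OF apos])
  show ?thesis
    using trace_summable[of a, OF apos] trace
      twisted_trace_unique[OF _ trace Tr_m_id_nonzero[of a, OF apos]]
    unfolding trV_converges_iff by blast
qed

end
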